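(* Let $G=(V,E,\gamma,c)$ be a typed DAG task executed on a platform with $M_s\ge1$ cores of each type $s\in S$ under any work-conserving scheduling algorithm, and let $R(G)$ be its worst-case response time. Then \[ R(G)\le \max_{\pi}\widetilde R(\pi),\qquad \widetilde R(\pi)=len(\pi)+\sum_{s\in S}\sum_{v\in\mathrm{ivs}(\pi,s)}\frac{c(v)}{M_s}, \] where the maximum ranges over the paths $\pi$ of $G$.
   Context: A typed DAG task is $G=(V,E,\gamma,c)$ where $(V,E)$ is a finite directed acyclic graph with a unique source $v_{src}$ and a unique sink $v_{snk}$, $S$ is a finite set of core types, $\gamma:V\to S$ gives the type of each vertex, and $c:V\to\mathbb{R}_{\ge0}$ gives the WCET of each vertex. The platform has $M_s\ge1$ cores of type $s$. $\mathrm{ans}(u)$, $\mathrm{des}(u)$ denote ancestors and descendants of $u$. For a path $\pi$, $len(\pi)=\sum_{u\in\pi}c(u)$. For $v\in V$, $\mathrm{par}(v)=\{u\in V: u\ne v,\ \gamma(u)=\gamma(v),\ u\notin \mathrm{ans}(v)\cup\mathrm{des}(v)\}$. For a path $\pi=(\tau_1,\dots,\tau_k)$ and $s\in S$, $\mathrm{ivs}(\pi,s)=\bigcup_{i:\gamma(\tau_i)=s}\mathrm{par}(\tau_i)$. Runtime model: a vertex becomes eligible when all its predecessors have finished (the source at time $0$); a vertex $v$ may only execute on cores of type $\gamma(v)$, one core at a time, for a total of at most $c(v)$ time units (possibly less). Scheduling is work-conserving: an eligible unfinished vertex of type $s$ must be executing whenever some core of type $s$ is available. The response time of an execution sequence is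 the finish time of $v_{snk}$; $R(G)$ is the maximum (supremum) response time over all possible execution sequences. *)

theory Defs
  imports "HOL-Analysis.Analysis"
begin

definition typed_dag_task ::
  "'v set \<Rightarrow> ('v \<times> 'v) set \<Rightarrow> 's set \<Rightarrow> ('v \<Rightarrow> 's) \<Rightarrow> ('v \<Rightarrow> real) \<Rightarrow> 'v \<Rightarrow> 'v \<Rightarrow> bool" where
  "typed_dag_task V E S \<gamma> c src snk \<longleftrightarrow>
     finite V \<and> E \<subseteq> V \<times> V \<and> acyclic E \<and> finite S \<and> \<gamma> ` V \<subseteq> S \<and>
     (\<forall>v\<in>V. c v \<ge> 0) \<and>
     src \<in> V \<and> snk \<in> V \<and>
     (\<forall>v\<in>V. (\<forall>u. (u, v) \<notin> E) \<longleftrightarrow> v = src) \<and>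
     (\<forall>v\<in>V. (\<forall>w. (v, w) \<notin> E) \<longleftrightarrow> v = snk)"

definition ans :: "('v \<times> 'v) set \<Rightarrow> 'v \<Rightarrow> 'v set" where
  "ans E v = {u. (u, v) \<in> E\<^sup>+}"

definition des :: "('v \<times> 'v) set \<Rightarrow> 'v \<Rightarrow> 'v set" where
  "des E v = {w. (v, w) \<in> E\<^sup>+}"

definition par :: "'v set \<Rightarrow> ('v \<times> 'v) set \<Rightarrow> ('v \<Rightarrow> 's) \<Rightarrow> 'v \<Rightarrow> 'v set" where
  "par V E \<gamma> v = {u \<in> V. u \<noteq> v \<and> \<gamma> u = \<gamma> v \<and> u \<notin> ans E v \<union> des E v}"

definition is_path :: "'v set \<Rightarrow> ('v \<times> 'v) set \<Rightarrow> 'v list \<Rightarrow> bool" where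
  "is_path V E \<pi> \<longleftrightarrow> \<pi> \<noteq> [] \<and> set \<pi> \<subseteq> V \<and>
     (\<forall>i. Suc i < length \<pi> \<longrightarrow> (\<pi> ! i, \<pi> ! Suc i) \<in> E)"

definition paths :: "'v set \<Rightarrow> ('v \<times> 'v) set \<Rightarrow> 'v list set" where
  "paths V E = {\<pi>. is_path V E \<pi>}"

definition len :: "('v \<Rightarrow> real) \<Rightarrow> 'v list \<Rightarrow> real" where
  "len c \<pi> = (\<Sum>u\<leftarrow>\<pi>. c u)"

definition ivs :: "'v set \<Rightarrow> ('v \<times> 'v) set \<Rightarrow> ('v \<Rightarrow> 's) \<Rightarrow> 'v list \<Rightarrow> 's \<Rightarrow> 'v set" where
  "ivs V E \<gamma> \<pi> s = (\<Union>i\<in>{i. i < length \<pi> \<and> \<gamma> (\<pi> ! i) = s}. par V E \<gamma> (\<pi> ! i))"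

definition R_tilde ::
  "'v set \<Rightarrow> ('v \<times> 'v) set \<Rightarrow> 's set \<Rightarrow> ('v \<Rightarrow> 's) \<Rightarrow> ('v \<Rightarrow> real) \<Rightarrow> ('s \<Rightarrow> nat) \<Rightarrow> 'v list \<Rightarrow> real" where
  "R_tilde V E S \<gamma> c M \<pi> =
     len c \<pi> + (\<Sum>s\<in>S. \<Sum>v\<in>ivs V E \<gamma> \<pi> s. c v / real (M s))"

text \<open>An execution sequence is given by
  run t  : the set of vertices executing at time t (each on one core),
  e v    : the actual execution time of v (0 \<le> e v \<le> c v),
  f v    : the finish time of v.\<close>

definition work :: "(real \<Rightarrow> 'v set) \<Rightarrow> 'v \<Rightarrow> real \<Rightarrow> real" where
  "work run v t = measure lborel ({\<tau>. v \<in> run \<tau>} \<inter> {0..<t})"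

definition eligible :: "('v \<times> 'v) set \<Rightarrow> ('v \<Rightarrow> real) \<Rightarrow> real \<Rightarrow> 'v \<Rightarrow> bool" where
  "eligible E f t v \<longleftrightarrow> 0 \<le> t \<and> (\<forall>u. (u, v) \<in> E \<longrightarrow> f u \<le> t)"

definition busy :: "(real \<Rightarrow> 'v set) \<Rightarrow> ('v \<Rightarrow> 's) \<Rightarrow> real \<Rightarrow> 's \<Rightarrow> nat" where
  "busy run \<gamma> t s = card {u \<in> run t. \<gamma> u = s}"

definition exec_seq ::
  "'v set \<Rightarrow> ('v \<times> 'v) set \<Rightarrow> ('v \<Rightarrow> 's) \<Rightarrow> ('v \<Rightarrow> real) \<Rightarrow> ('s \<Rightarrow> nat)
   \<Rightarrow> (real \<Rightarrow> 'v set) \<Rightarrow> ('v \<Rightarrow> real) \<Rightarrow> ('v \<Rightarrow> real) \<Rightarrow> bool" where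
  "exec_seq V E \<gamma> c M run e f \<longleftrightarrow>
     \<comment> \<open>actual execution times\<close>
     (\<forall>v\<in>V. 0 \<le> e v \<and> e v \<le> c v) \<and>
     \<comment> \<open>measurability of execution intervals\<close>
     (\<forall>v. {\<tau>. v \<in> run \<tau>} \<in> sets lborel) \<and>
     \<comment> \<open>only eligible, unfinished vertices of the task execute\<close>
     (\<forall>t v. v \<in> run t \<longrightarrow> v \<in> V \<and> eligible E f t v \<and> t < f v) \<and>
     \<comment> \<open>at most M s cores of type s are in use (a vertex runs on one core of its own type)\<close>
     (\<forall>t s. busy run \<gamma> t s \<le> M s) \<and>
     \<comment> \<open>finishing: v finishes once eligible and its work reaches e v, not earlier\<close>
     (\<forall>v\<in>V. eligible E f (f v) v \<and> work run v (f v) = e v \<and>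
        (\<forall>t. eligible E f t v \<and> t < f v \<longrightarrow> work run v t < e v)) \<and>
     \<comment> \<open>work-conserving\<close>
     (\<forall>t v. v \<in> V \<and> eligible E f t v \<and> t < f v \<longrightarrow>
        v \<in> run t \<or> busy run \<gamma> t (\<gamma> v) = M (\<gamma> v))"

end

theory Submission
  imports Defs
begin

text \<open>Follow a critical path backwards from the sink, always stepping to the predecessor that
  finishes last. At every instant before the sink finishes some vertex w of this path is eligible
  and unfinished. Either w is running, which is paid for by the length of the path, or by work
  conservation all M s cores of type s = \<gamma> w are busy; the vertices occupying them are
  incomparable to w, so they lie in par w, and such instants are paid for by the interference
  term. Integrating this pointwise bound over time, with the work of each vertex at most its
  WCET, gives the bound.\<close>

lemma is_path_nth_trancl:
  assumes "is_path V E \<pi>" "j < length \<pi>" "i < j"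
  shows "(\<pi> ! i, \<pi> ! j) \<in> E\<^sup>+"
  using assms(2,3)
proof (induction j)
  case 0
  then show ?case by simp
next
  case (Suc j)
  have "(\<pi> ! j, \<pi> ! Suc j) \<in> E"
    using assms(1) Suc.prems unfolding is_path_def by blast
  moreover have "i = j \<or> (\<pi> ! i, \<pi> ! j) \<in> E\<^sup>+"
    using Suc by (cases "i = j") auto
  ultimately show ?case by auto
qed

lemma distinct_is_path:
  assumes "acyclic E" "is_path V E \<pi>"
  shows "distinct \<pi>"
  unfolding distinct_conv_nth
proof (intro allI impI)
  fix i j assume ij: "i < length \<pi>" "j < length \<pi>" "i \<noteq> j"
  have "(\<pi> ! i, \<pi> ! j) \<in> E\<^sup>+ \<or> (\<pi> ! j, \<pi> ! i) \<in> E\<^sup>+"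
    using ij is_path_nth_trancl[OF assms(2)] by (metis linorder_neqE_nat)
  then show "\<pi> ! i \<noteq> \<pi> ! j"
    using assms(1) unfolding acyclic_def by metis
qed

lemma finite_paths:
  assumes "finite V" "acyclic E"
  shows "finite (paths V E)"
proof (rule finite_subset)
  show "paths V E \<subseteq> {xs. set xs \<subseteq> V \<and> length xs \<le> card V}"
  proof
    fix \<pi> assume "\<pi> \<in> paths V E"
    then have path: "is_path V E \<pi>" and "set \<pi> \<subseteq> V"
      by (auto simp: paths_def is_path_def)
    moreover have "length \<pi> = card (set \<pi>)"
      using distinct_is_path[OF assms(2) path] by (simp add: distinct_card)
    ultimately show "\<pi> \<in> {xs. set xs \<subseteq> V \<and> length xs \<le> card V}"
      using assms(1) card_mono by fastforce
  qed
  show "finite {xs. set xs \<subseteq> V \<and> length xs \<le> card V}"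
    using finite_lists_length_le[OF assms(1)] by simp
qed

lemma is_path_snoc:
  assumes "is_path V E \<pi>" "(last \<pi>, v) \<in> E" "v \<in> V"
  shows "is_path V E (\<pi> @ [v])"
  unfolding is_path_def
proof (intro conjI allI impI)
  show "\<pi> @ [v] \<noteq> []" by simp
  show "set (\<pi> @ [v]) \<subseteq> V"
    using assms by (auto simp: is_path_def)
  fix i assume i: "Suc i < length (\<pi> @ [v])"
  show "((\<pi> @ [v]) ! i, (\<pi> @ [v]) ! Suc i) \<in> E"
  proof (cases "Suc i < length \<pi>")
    case True
    then show ?thesis using assms(1) by (simp add: nth_append is_path_def)
  next
    case False
    then have "i = length \<pi> - 1" "\<pi> \<noteq> []"
      using i assms(1) by (auto simp: is_path_def)
    then show ?thesis using assms(2) by (auto simp: nth_append last_conv_nth)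
  qed
qed

definition pending :: "('v \<times> 'v) set \<Rightarrow> ('v \<Rightarrow> real) \<Rightarrow> real \<Rightarrow> 'v \<Rightarrow> bool" where
  "pending E f t v \<longleftrightarrow> eligible E f t v \<and> t < f v"

lemma critical_path_exists:
  assumes "finite V" "E \<subseteq> V \<times> V" "acyclic E" "v \<in> V"
  shows "\<exists>\<pi>. is_path V E \<pi> \<and> last \<pi> = v \<and> (\<forall>t\<in>{0..<f v}. \<exists>w\<in>set \<pi>. pending E f t w)"
proof -
  have "finite E"
    using finite_subset[OF assms(2)] assms(1) by simp
  then have "wf E"
    using assms(3) by (rule finite_acyclic_wf)
  then show ?thesis
    using assms(4)
  proof (induction v rule: wf_induct_rule)
    case (less v)
    define P where "P = {u. (u, v) \<in> E}"
    show ?case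
    proof (cases "P = {}")
      case True
      then have "\<forall>t\<in>{0..<f v}. pending E f t v"
        by (auto simp: pending_def eligible_def P_def)
      moreover have "is_path V E [v]"
        using less.prems by (simp add: is_path_def)
      ultimately show ?thesis
        by (intro exI[of _ "[v]"]) auto
    next
      case False
      have "P \<subseteq> V"
        using assms(2) by (auto simp: P_def)
      then have "finite P"
        using assms(1) by (rule finite_subset)
      then have "Max (f ` P) \<in> f ` P"
        using False by simp
      then obtain u where "u \<in> P" and "f u = Max (f ` P)"
        by auto
      then have u_last: "\<forall>u'\<in>P. f u' \<le> f u"
        using \<open>finite P\<close> by simp
      have uv: "(u, v) \<in> E" and "u \<in> V"
        using \<open>u \<in> P\<close> assms(2) by (auto simp: P_def)
      then obtain \<pi> where \<pi>: "is_path V E \<pi>" "last \<pi> = u"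
          and covered: "\<forall>t\<in>{0..<f u}. \<exists>w\<in>set \<pi>. pending E f t w"
        using less.IH by blast
      have "\<exists>w\<in>set (\<pi> @ [v]). pending E f t w" if t: "t \<in> {0..<f v}" for t
      proof (cases "t < f u")
        case True
        then show ?thesis using covered t by auto
      next
        case False
        then have "\<forall>u'. (u', v) \<in> E \<longrightarrow> f u' \<le> t"
          using u_last unfolding P_def by fastforce
        then have "pending E f t v"
          using t unfolding pending_def eligible_def by simp
        then show ?thesis by simp
      qed
      moreover have "is_path V E (\<pi> @ [v])"
        using is_path_snoc[OF \<pi>(1)] \<pi>(2) uv less.prems by simp
      ultimately show ?thesis
        by (intro exI[of _ "\<pi> @ [v]"]) auto
    qed
  qed
qed

locale typed_dag_execution =
  fixes V :: "'v set" and E :: "('v \<times> 'v) set" and S :: "'s set"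
    and \<gamma> :: "'v \<Rightarrow> 's" and c :: "'v \<Rightarrow> real" and src snk :: 'v
    and M :: "'s \<Rightarrow> nat"
    and run :: "real \<Rightarrow> 'v set" and e f :: "'v \<Rightarrow> real"
  assumes task: "typed_dag_task V E S \<gamma> c src snk"
    and cores_pos: "\<forall>s\<in>S. M s \<ge> 1"
    and exec: "exec_seq V E \<gamma> c M run e f"
begin

lemma finite_V: "finite V"
  and edges_subset: "E \<subseteq> V \<times> V"
  and acyclic_E: "acyclic E"
  and finite_S: "finite S"
  and types_in_S: "\<gamma> ` V \<subseteq> S"
  and sink_in_V: "snk \<in> V"
  using task unfolding typed_dag_task_def by auto

lemma work_le_wcet: "v \<in> V \<Longrightarrow> e v \<le> c v"
  and running_set_measurable: "{\<tau>. v \<in> run \<tau>} \<in> sets lborel"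
  and running_pending: "v \<in> run t \<Longrightarrow> v \<in> V \<and> pending E f t v"
  and eligible_at_finish: "v \<in> V \<Longrightarrow> eligible E f (f v) v"
  and work_at_finish: "v \<in> V \<Longrightarrow> work run v (f v) = e v"
  and work_conserving:
    "v \<in> V \<Longrightarrow> pending E f t v \<Longrightarrow> v \<notin> run t \<Longrightarrow> busy run \<gamma> t (\<gamma> v) = M (\<gamma> v)"
  using exec unfolding exec_seq_def pending_def by blast+

lemma finish_nonneg: "v \<in> V \<Longrightarrow> 0 \<le> f v"
  using eligible_at_finish by (simp add: eligible_def)

lemma finish_mono:
  assumes "(u, v) \<in> E\<^sup>*"
  shows "f u \<le> f v"
  using assms
proof (induction rule: rtrancl_induct)
  case (step w v)
  then have "f w \<le> f v"
    using eligible_at_finish[of v] edges_subset by (auto simp: eligible_def)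
  with step.IH show ?case by simp
qed simp

text \<open>A pending vertex and a vertex running at the same time are incomparable: an ancestor
  has finished once v is eligible, a descendant cannot start before v has finished.\<close>

lemma running_in_par:
  assumes "pending E f t v" "u \<in> run t" "u \<noteq> v" "\<gamma> u = \<gamma> v"
  shows "u \<in> par V E \<gamma> v"
proof -
  have u: "u \<in> V" "pending E f t u"
    using running_pending[OF assms(2)] by auto
  have "(u, v) \<notin> E\<^sup>+"
  proof
    assume "(u, v) \<in> E\<^sup>+"
    then obtain w where "(u, w) \<in> E\<^sup>*" "(w, v) \<in> E" by (meson tranclD2)
    then have "f u \<le> f w" "f w \<le> t"
      using finish_mono assms(1) by (auto simp: pending_def eligible_def)
    then show False using u(2) by (simp add: pending_def)
  qed
  moreover have "(v, u) \<notin> E\<^sup>+"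
  proof
    assume "(v, u) \<in> E\<^sup>+"
    then obtain w where "(v, w) \<in> E\<^sup>*" "(w, u) \<in> E" by (meson tranclD2)
    then have "f v \<le> f w" "f w \<le> t"
      using finish_mono u(2) by (auto simp: pending_def eligible_def)
    then show False using assms(1) by (simp add: pending_def)
  qed
  ultimately show ?thesis
    using u(1) assms(3,4) by (auto simp: par_def ans_def des_def)
qed

lemma finite_ivs: "finite (ivs V E \<gamma> \<pi> s)"
  using finite_V by (rule finite_subset[rotated]) (auto simp: ivs_def par_def)

definition path_load :: "'v list \<Rightarrow> real \<Rightarrow> real" where
  "path_load \<pi> t = real (card (set \<pi> \<inter> run t))
     + (\<Sum>s\<in>S. real (card (ivs V E \<gamma> \<pi> s \<inter> run t)) / real (M s))"

lemma path_load_nonneg: "0 \<le> path_load \<pi> t"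
  unfolding path_load_def by (intro add_nonneg_nonneg sum_nonneg divide_nonneg_nonneg) auto

lemma pending_on_path_load:
  assumes "set \<pi> \<subseteq> V" "w \<in> set \<pi>" "pending E f t w"
  shows "1 \<le> path_load \<pi> t"
proof -
  let ?interference = "\<Sum>s\<in>S. real (card (ivs V E \<gamma> \<pi> s \<inter> run t)) / real (M s)"
  have interference_nonneg: "0 \<le> ?interference"
    by (intro sum_nonneg divide_nonneg_nonneg) auto
  show ?thesis
    unfolding path_load_def
  proof (cases "w \<in> run t")
    case True
    then have "card (set \<pi> \<inter> run t) \<noteq> 0"
      using assms(2) by auto
    then show "1 \<le> real (card (set \<pi> \<inter> run t)) + ?interference"
      using interference_nonneg by linarith
  next
    case False
    define s where "s = \<gamma> w"
    have "w \<in> V" using assms(1,2) by auto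
    then have "s \<in> S" and busy: "busy run \<gamma> t s = M s"
      using types_in_S work_conserving False assms(3) unfolding s_def by auto
    have "{u \<in> run t. \<gamma> u = s} \<subseteq> ivs V E \<gamma> \<pi> s \<inter> run t"
    proof
      fix u assume u: "u \<in> {u \<in> run t. \<gamma> u = s}"
      then have "u \<in> par V E \<gamma> w"
        using running_in_par[OF assms(3)] False s_def by auto
      moreover obtain i where "i < length \<pi>" "\<pi> ! i = w"
        using assms(2) by (meson in_set_conv_nth)
      ultimately show "u \<in> ivs V E \<gamma> \<pi> s \<inter> run t"
        using u s_def unfolding ivs_def by auto
    qed
    then have "real (M s) \<le> real (card (ivs V E \<gamma> \<pi> s \<inter> run t))"
      using busy finite_ivs card_mono unfolding busy_def by (metis finite_Int of_nat_mono)
    moreover have "0 < real (M s)"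
      using cores_pos \<open>s \<in> S\<close> by fastforce
    ultimately have "1 \<le> real (card (ivs V E \<gamma> \<pi> s \<inter> run t)) / real (M s)"
      by (simp add: le_divide_eq)
    also have "\<dots> \<le> ?interference"
      using \<open>s \<in> S\<close> finite_S by (intro member_le_sum) auto
    finally show "1 \<le> real (card (set \<pi> \<inter> run t)) + ?interference"
      by simp
  qed
qed

lemma running_set_finite_measure: "emeasure lborel {\<tau>. u \<in> run \<tau>} < \<infinity>"
proof -
  have "{\<tau>. u \<in> run \<tau>} \<subseteq> {0..f u}"
    by (auto dest: running_pending simp: pending_def eligible_def)
  then have "emeasure lborel {\<tau>. u \<in> run \<tau>} \<le> emeasure lborel {0..f u}"
    by (intro emeasure_mono) auto
  also have "\<dots> < \<infinity>" by (cases "0 \<le> f u") auto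
  finally show ?thesis .
qed

lemma measure_running_set:
  assumes "u \<in> V"
  shows "measure lborel {\<tau>. u \<in> run \<tau>} = e u"
proof -
  have "{\<tau>. u \<in> run \<tau>} \<inter> {0..<f u} = {\<tau>. u \<in> run \<tau>}"
    by (auto dest: running_pending simp: pending_def eligible_def)
  then show ?thesis
    using work_at_finish[OF assms] by (simp only: work_def)
qed

lemma card_running_eq_sum_indicator:
  "finite A \<Longrightarrow> real (card (A \<inter> run t)) = (\<Sum>u\<in>A. indicator {\<tau>. u \<in> run \<tau>} t)"
  by (simp add: indicator_def sum.If_cases Int_def)

lemma integrable_card_running:
  assumes "finite A"
  shows "integrable lborel (\<lambda>t. real (card (A \<inter> run t)))"
proof -
  have "integrable lborel (\<lambda>t. \<Sum>u\<in>A. indicator {\<tau>. u \<in> run \<tau>} t :: real)"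
    using running_set_measurable running_set_finite_measure
    by (intro Bochner_Integration.integrable_sum integrable_real_indicator)
  then show ?thesis
    by (simp only: card_running_eq_sum_indicator[OF assms])
qed

lemma integral_card_running:
  assumes "A \<subseteq> V"
  shows "(\<integral>t. real (card (A \<inter> run t)) \<partial>lborel) = (\<Sum>u\<in>A. e u)"
proof -
  have "finite A"
    using finite_V assms by (rule finite_subset[rotated])
  then have "(\<integral>t. real (card (A \<inter> run t)) \<partial>lborel)
      = (\<integral>t. (\<Sum>u\<in>A. indicator {\<tau>. u \<in> run \<tau>} t) \<partial>lborel)"
    by (simp only: card_running_eq_sum_indicator)
  also have "\<dots> = (\<Sum>u\<in>A. measure lborel {\<tau>. u \<in> run \<tau>})"
    using running_set_measurable running_set_finite_measure
    by (subst Bochner_Integration.integral_sum) auto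
  also have "\<dots> = (\<Sum>u\<in>A. e u)"
    using assms measure_running_set by (intro sum.cong) auto
  finally show ?thesis .
qed

lemma integrable_path_load: "integrable lborel (path_load \<pi>)"
  unfolding path_load_def using finite_ivs
  by (intro Bochner_Integration.integrable_add Bochner_Integration.integrable_sum
      integrable_divide_zero integrable_card_running) auto

lemma integral_path_load_le_R_tilde:
  assumes "is_path V E \<pi>"
  shows "(\<integral>t. path_load \<pi> t \<partial>lborel) \<le> R_tilde V E S \<gamma> c M \<pi>"
proof -
  define I where "I s = ivs V E \<gamma> \<pi> s" for s
  have \<pi>_in_V: "set \<pi> \<subseteq> V" and I_in_V: "I s \<subseteq> V" for s
    using assms by (auto simp: is_path_def I_def ivs_def par_def)
  have "(\<integral>t. path_load \<pi> t \<partial>lborel)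
      = (\<Sum>u\<in>set \<pi>. e u) + (\<Sum>s\<in>S. (\<Sum>u\<in>I s. e u) / real (M s))"
    unfolding path_load_def using \<pi>_in_V I_in_V finite_ivs
    by (simp add: Bochner_Integration.integral_sum integrable_card_running
        integral_card_running I_def)
  also have "\<dots> \<le> len c \<pi> + (\<Sum>s\<in>S. \<Sum>u\<in>I s. c u / real (M s))"
  proof (intro add_mono sum_mono)
    show "(\<Sum>u\<in>set \<pi>. e u) \<le> len c \<pi>"
      using distinct_is_path[OF acyclic_E assms] \<pi>_in_V
      by (auto simp: len_def sum_list_distinct_conv_sum_set intro!: sum_mono work_le_wcet)
    show "(\<Sum>u\<in>I s. e u) / real (M s) \<le> (\<Sum>u\<in>I s. c u / real (M s))" for s
      using I_in_V
      by (auto simp: sum_divide_distrib[symmetric] intro!: divide_right_mono sum_mono work_le_wcet)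
  qed
  finally show ?thesis
    by (simp add: R_tilde_def I_def)
qed

lemma le_R_tilde_if_path_pending:
  assumes "is_path V E \<pi>" "0 \<le> T" "\<forall>t\<in>{0..<T}. \<exists>w\<in>set \<pi>. pending E f t w"
  shows "T \<le> R_tilde V E S \<gamma> c M \<pi>"
proof -
  have "indicator {0..<T} t \<le> path_load \<pi> t" for t
  proof (cases "t \<in> {0..<T}")
    case True
    then obtain w where "w \<in> set \<pi>" "pending E f t w"
      using assms(3) by blast
    then show ?thesis
      using True pending_on_path_load assms(1) by (simp add: is_path_def)
  next
    case False
    then show ?thesis using path_load_nonneg by simp
  qed
  then have "T \<le> (\<integral>t. path_load \<pi> t \<partial>lborel)"
    using assms(2) integrable_path_load integral_mono[of lborel "indicator {0..<T}" "path_load \<pi>"]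
    by simp
  also have "\<dots> \<le> R_tilde V E S \<gamma> c M \<pi>"
    using assms(1) by (rule integral_path_load_le_R_tilde)
  finally show ?thesis .
qed

end

theorem theorem3:
  fixes V :: "'v set" and E :: "('v \<times> 'v) set" and S :: "'s set"
    and \<gamma> :: "'v \<Rightarrow> 's" and c :: "'v \<Rightarrow> real" and src snk :: 'v
    and M :: "'s \<Rightarrow> nat"
    and run :: "real \<Rightarrow> 'v set" and e f :: "'v \<Rightarrow> real"
  assumes "typed_dag_task V E S \<gamma> c src snk"
    and "\<forall>s\<in>S. M s \<ge> 1"
    and "exec_seq V E \<gamma> c M run e f"
  shows "f snk \<le> Max (R_tilde V E S \<gamma> c M ` paths V E)"
proof -
  interpret typed_dag_execution V E S \<gamma> c src snk M run e f
    using assms by unfold_locales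
  obtain \<pi> where \<pi>: "is_path V E \<pi>" and covered: "\<forall>t\<in>{0..<f snk}. \<exists>w\<in>set \<pi>. pending E f t w"
    using critical_path_exists[OF finite_V edges_subset acyclic_E sink_in_V] by blast
  have "f snk \<le> R_tilde V E S \<gamma> c M \<pi>"
    using le_R_tilde_if_path_pending[OF \<pi> finish_nonneg[OF sink_in_V] covered] .
  also have "\<dots> \<le> Max (R_tilde V E S \<gamma> c M ` paths V E)"
    using finite_paths[OF finite_V acyclic_E] \<pi> by (intro Max_ge) (auto simp: paths_def)
  finally show ?thesis .
qed

end
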